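(* For every tree $T=(V,E,w)$ with positive integer costs there exists an optimal extended strategy function $f$ for $T$ such that $|f(v)|=w(v)$ for every $v\in V$.
   Context: Intervals are of the form $[a,b)$ with integers $0\le a<b$, and $|[a,b)|=b-a$. For intervals $I=[a,b)$, $I'=[a',b')$ write $I>I'$ iff $a\ge b'$. An extended strategy function for $T$ is a map $f$ assigning to each vertex $v$ an interval $f(v)$ with $|f(v)|\ge w(v)$, such that for any distinct $v_1,v_2$ with $f(v_1)\cap f(v_2)\ne\emptyset$, the path between $v_1$ and $v_2$ contains a vertex $v_3$ with $f(v_3)>f(v_1)$ and $f(v_3)>f(v_2)$. An extended strategy function $f$ is optimal if $\sup\bigcup_{v\in V}f(v)$ is minimum among all extended strategy functions for $T$. *)

theory Defs
  imports Main
begin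

definition is_path :: "('a \<Rightarrow> 'a \<Rightarrow> bool) \<Rightarrow> 'a \<Rightarrow> 'a \<Rightarrow> 'a list \<Rightarrow> bool" where
  "is_path E u v p \<longleftrightarrow> p \<noteq> [] \<and> hd p = u \<and> last p = v \<and> distinct p \<and>
     (\<forall>i. Suc i < length p \<longrightarrow> E (p ! i) (p ! Suc i))"

text \<open>A tree: finite nonempty vertex set, simple undirected edges inside V,
connected, and acyclic (every pair of vertices is joined by a unique path).\<close>

definition is_tree :: "'a set \<Rightarrow> ('a \<Rightarrow> 'a \<Rightarrow> bool) \<Rightarrow> bool" where
  "is_tree V E \<longleftrightarrow> finite V \<and> V \<noteq> {} \<and>
     (\<forall>u v. E u v \<longrightarrow> u \<in> V \<and> v \<in> V \<and> u \<noteq> v \<and> E v u) \<and>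
     (\<forall>u\<in>V. \<forall>v\<in>V. \<exists>p. is_path E u v p) \<and>
     (\<forall>u v p q. is_path E u v p \<and> is_path E u v q \<longrightarrow> p = q)"

text \<open>Intervals [a,b) with integers 0 \<le> a < b are represented by pairs (a,b) of naturals.\<close>

definition ival :: "nat \<times> nat \<Rightarrow> nat set" where
  "ival I = {fst I ..< snd I}"

definition ilen :: "nat \<times> nat \<Rightarrow> nat" where
  "ilen I = snd I - fst I"

definition igt :: "nat \<times> nat \<Rightarrow> nat \<times> nat \<Rightarrow> bool" where
  "igt I I' \<longleftrightarrow> fst I \<ge> snd I'"

definition ext_strategy ::
  "'a set \<Rightarrow> ('a \<Rightarrow> 'a \<Rightarrow> bool) \<Rightarrow> ('a \<Rightarrow> nat) \<Rightarrow> ('a \<Rightarrow> nat \<times> nat) \<Rightarrow> bool" where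
  "ext_strategy V E w f \<longleftrightarrow>
     (\<forall>v\<in>V. fst (f v) < snd (f v) \<and> ilen (f v) \<ge> w v) \<and>
     (\<forall>v1\<in>V. \<forall>v2\<in>V. v1 \<noteq> v2 \<and> ival (f v1) \<inter> ival (f v2) \<noteq> {} \<longrightarrow>
        (\<exists>p. is_path E v1 v2 p \<and>
             (\<exists>v3\<in>set p. igt (f v3) (f v1) \<and> igt (f v3) (f v2))))"

text \<open>sup of the union of the intervals [a,b) (as a real supremum) is the maximal right end b.\<close>
definition span :: "'a set \<Rightarrow> ('a \<Rightarrow> nat \<times> nat) \<Rightarrow> nat" where
  "span V f = Max ((\<lambda>v. snd (f v)) ` V)"

definition optimal_strategy ::
  "'a set \<Rightarrow> ('a \<Rightarrow> 'a \<Rightarrow> bool) \<Rightarrow> ('a \<Rightarrow> nat) \<Rightarrow> ('a \<Rightarrow> nat \<times> nat) \<Rightarrow> bool" where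
  "optimal_strategy V E w f \<longleftrightarrow> ext_strategy V E w f \<and>
     (\<forall>g. ext_strategy V E w g \<longrightarrow> span V f \<le> span V g)"

end

theory Submission
  imports Defs
begin

text \<open>Shrinking every interval of a strategy function to a subinterval preserves the separation
  condition, because the separating interval only moves right and the separated ones only
  end earlier. So truncating each interval of an optimal strategy to length w v gives a strategy
  whose span is no larger, hence again optimal. An optimal strategy exists since some strategy
  exists at all: intervals in pairwise disjoint blocks satisfy the separation condition vacuously.\<close>

lemma ext_strategy_if_disjoint:
  assumes "\<forall>v\<in>V. fst (f v) < snd (f v) \<and> w v \<le> ilen (f v)"
    and "\<forall>v1\<in>V. \<forall>v2\<in>V. v1 \<noteq> v2 \<longrightarrow> ival (f v1) \<inter> ival (f v2) = {}"
  shows "ext_strategy V E w f"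
  using assms unfolding ext_strategy_def by blast

lemma ext_strategy_exists:
  assumes "finite V"
  shows "\<exists>f. ext_strategy V E w f"
proof -
  obtain h :: "'a \<Rightarrow> nat" where h: "inj_on h V"
    using finite_imp_inj_to_nat_seg[OF assms] by blast
  define K where "K = Suc (\<Sum>v\<in>V. w v)"
  define f where "f v = (K * h v, K * h v + K)" for v
  have "w v \<le> ilen (f v)" if "v \<in> V" for v
    using member_le_sum[OF that, of w] assms by (simp add: f_def ilen_def K_def)
  moreover have "ival (f v1) \<inter> ival (f v2) = {}"
    if "v1 \<in> V" "v2 \<in> V" "v1 \<noteq> v2" for v1 v2
  proof -
    have block: "x div K = h v" if "x \<in> ival (f v)" for x v
      using that by (intro div_nat_eqI) (auto simp: ival_def f_def K_def)
    show ?thesis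
    proof (rule ccontr)
      assume "ival (f v1) \<inter> ival (f v2) \<noteq> {}"
      then obtain x where "x \<in> ival (f v1)" "x \<in> ival (f v2)" by blast
      then have "h v1 = h v2" using block by metis
      with h that show False by (meson inj_onD)
    qed
  qed
  ultimately have "ext_strategy V E w f"
    by (intro ext_strategy_if_disjoint) (auto simp: f_def K_def)
  then show ?thesis by blast
qed

lemma optimal_strategy_exists:
  assumes "finite V"
  shows "\<exists>f. optimal_strategy V E w f"
proof -
  obtain g where "ext_strategy V E w g"
    using ext_strategy_exists[OF assms] ..
  then show ?thesis
    unfolding optimal_strategy_def
    using ex_has_least_nat[of "ext_strategy V E w" g "span V"] by blast
qed

lemma ext_strategy_subintervals:
  assumes f: "ext_strategy V E w f"
    and left: "\<forall>v. fst (f v) \<le> fst (g v)"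
    and right: "\<forall>v\<in>V. snd (g v) \<le> snd (f v)"
    and valid: "\<forall>v\<in>V. fst (g v) < snd (g v) \<and> w v \<le> ilen (g v)"
  shows "ext_strategy V E w g"
  unfolding ext_strategy_def
proof (intro conjI valid ballI impI)
  fix v1 v2 assume v: "v1 \<in> V" "v2 \<in> V" "v1 \<noteq> v2 \<and> ival (g v1) \<inter> ival (g v2) \<noteq> {}"
  have "ival (g v) \<subseteq> ival (f v)" if "v \<in> V" for v
    using left right that by (auto simp: ival_def)
  with v have "ival (f v1) \<inter> ival (f v2) \<noteq> {}" by blast
  with v f obtain p v3 where "is_path E v1 v2 p" "v3 \<in> set p"
    and "igt (f v3) (f v1)" "igt (f v3) (f v2)"
    unfolding ext_strategy_def by blast
  moreover have "igt (g v3) (g v1)" "igt (g v3) (g v2)"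
    using calculation(3,4) left right v(1,2) unfolding igt_def by (meson le_trans)+
  ultimately show "\<exists>p. is_path E v1 v2 p \<and> (\<exists>v3\<in>set p. igt (g v3) (g v1) \<and> igt (g v3) (g v2))"
    by blast
qed

lemma span_mono:
  assumes "finite V" "V \<noteq> {}" "\<forall>v\<in>V. snd (g v) \<le> snd (f v)"
  shows "span V g \<le> span V f"
  unfolding span_def
proof (rule Max.boundedI)
  fix x assume "x \<in> (\<lambda>v. snd (g v)) ` V"
  then obtain v where "v \<in> V" "x = snd (g v)" by blast
  moreover have "snd (f v) \<le> Max ((\<lambda>v. snd (f v)) ` V)"
    using assms(1) \<open>v \<in> V\<close> by (intro Max_ge) auto
  ultimately show "x \<le> Max ((\<lambda>v. snd (f v)) ` V)"
    using assms(3) by (meson le_trans)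
qed (use assms in auto)

theorem mainTheorem11:
  fixes V :: "'a set" and E :: "'a \<Rightarrow> 'a \<Rightarrow> bool" and w :: "'a \<Rightarrow> nat"
  assumes "is_tree V E"
    and "\<forall>v\<in>V. w v > 0"
  shows "\<exists>f. optimal_strategy V E w f \<and> (\<forall>v\<in>V. ilen (f v) = w v)"
proof -
  have fin: "finite V" and ne: "V \<noteq> {}"
    using assms(1) by (auto simp: is_tree_def)
  obtain f where f: "ext_strategy V E w f"
    and least: "\<forall>g. ext_strategy V E w g \<longrightarrow> span V f \<le> span V g"
    using optimal_strategy_exists[OF fin] unfolding optimal_strategy_def by blast
  define g where "g v = (fst (f v), fst (f v) + w v)" for v
  have right: "\<forall>v\<in>V. snd (g v) \<le> snd (f v)"
    using f by (auto simp: ext_strategy_def g_def ilen_def)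
  have "ext_strategy V E w g"
    using f right assms(2)
    by (intro ext_strategy_subintervals[OF f]) (auto simp: g_def ilen_def)
  moreover have "span V g \<le> span V f"
    using span_mono[OF fin ne right] .
  ultimately have "optimal_strategy V E w g"
    using least unfolding optimal_strategy_def by (meson le_trans)
  moreover have "\<forall>v\<in>V. ilen (g v) = w v"
    by (simp add: g_def ilen_def)
  ultimately show ?thesis by blast
qed

end
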